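(* Fix integers $c\ge2$, $k\ge2$. Let $P$ be the RAM program that, on a dataset $x$ with $n=|x|$ (read from $\texttt{input\_len}$), performs independent biased coin flips where flip number $i+1$ ($i=0,1,2,\dots$) succeeds with probability $\frac{1}{(\max\{n-i,0\}+k)^c}$ (computed by forming $b=\max\{n-i,0\}+k$, computing $b^c$ by $c-1$ multiplications, and drawing randomness), stops at the first success, and outputs the number $i$ of unsuccessful flips preceding it; each loop iteration executes a fixed number of instructions independent of $x$ and $n$, so the runtime is a deterministic (affine) function of the output. Then $P$ is $\varepsilon$-JOT-DP in the unbounded setting, where $\varepsilon=2c\ln\!\big(\frac{k+1}{k-1}\big)$.
   Context: Datasets are finite sequences of records; two datasets are adjacent if their insert-delete distance (minimum number of single-record insertions/deletions transforming one into the other) is at most $1$. A program runs on $x$ in an execution environment $\mathit{env}$ (initial machine state) compatible with $x$, with random output $\mathrm{out}(P(x,\mathit{env}))$ and random runtime $T_P(x,\mathit{env})$ (number of RAM instructions executed). $P$ is $\varepsilon$-JOT-DP in the unbounded setting if for all adjacent datasets $x,x'$ of arbitrary lengths, all compatible $\mathit{env},\mathit{env}'$ and all sets $S$ of (output, runtime) pairs, $\Pr[(\mathrm{out}(P(x,\mathit{env})),T_P(x,\mathit{env}))\in S]\le e^{\varepsilon}\Pr[(\mathrm{out}(P(x',\mathit{env}')),T_P(x',\mathit{env}'))\in S]$. Thus the output has pmf $f_n(i)=p_n(i)\prod_{j=0}^{i-1}(1-p_n(j))$ with $p_n(j)=1/(\max\{n-j,0\}+k)^c$. *)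

theory Defs
  imports "HOL-Analysis.Analysis"
begin

definition ins_del_adjacent :: "'a list \<Rightarrow> 'a list \<Rightarrow> bool" where
  "ins_del_adjacent x x' \<longleftrightarrow>
     x = x'
   \<or> (\<exists>ys zs a. x' = ys @ a # zs \<and> x = ys @ zs)
   \<or> (\<exists>ys zs a. x = ys @ a # zs \<and> x' = ys @ zs)"

definition flip_prob :: "nat \<Rightarrow> nat \<Rightarrow> nat \<Rightarrow> nat \<Rightarrow> real" where
  "flip_prob c k n j = 1 / (real (nat (max (int n - int j) 0) + k)) ^ c"

definition out_pmf :: "nat \<Rightarrow> nat \<Rightarrow> nat \<Rightarrow> nat \<Rightarrow> real" where
  "out_pmf c k n i = flip_prob c k n i * (\<Prod>j<i. 1 - flip_prob c k n j)"

text \<open>The runtime is the deterministic affine function t0 + t1 * i of the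
output i (t0, t1 are the fixed instruction counts of the program, independent
of the data and of the environment).\<close>
definition joint_prob :: "nat \<Rightarrow> nat \<Rightarrow> nat \<Rightarrow> nat \<Rightarrow> 'a list \<Rightarrow> (nat \<times> nat) set \<Rightarrow> real" where
  "joint_prob c k t0 t1 x S =
     (\<Sum>\<^sub>\<infinity> i \<in> {i. (i, t0 + t1 * i) \<in> S}. out_pmf c k (length x) i)"

end

theory Submission
  imports Defs
begin

text \<open>Write \<open>m\<^sub>n(j) = (n - j) + k\<close> for the base of flip \<open>j + 1\<close> on a dataset of size \<open>n\<close>
  and \<open>Q\<^sub>n(i) = \<Prod>j<i. (1 - 1/m\<^sub>n(j)\<^sup>c)\<close> for the probability that the first \<open>i\<close> flips fail,
  so that \<open>f\<^sub>n(i) = Q\<^sub>n(i) / m\<^sub>n(i)\<^sup>c\<close>. Adding a record raises each base by at most one,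
  and \<open>m\<^sub>n \<ge> k\<close>, so the success probability of each flip drops by at most a factor
  \<open>((k+1)/k)\<^sup>c\<close> while \<open>Q\<close> only grows: this bounds \<open>f\<^sub>n / f\<^sub>n\<^sub>+\<^sub>1\<close>. Conversely
  \<open>m\<^sub>n\<^sub>+\<^sub>1(j+1) = m\<^sub>n(j)\<close>, and the ratio \<open>Q\<^sub>n\<^sub>+\<^sub>1(i) / Q\<^sub>n(i)\<close> telescopes against
  \<open>b \<mapsto> 1 - 1/b\<close> along the bases, giving \<open>Q\<^sub>n\<^sub>+\<^sub>1(i) \<le> Q\<^sub>n(i) / (1 - 1/k)\<close> and hence
  \<open>f\<^sub>n\<^sub>+\<^sub>1 \<le> k/(k-1) \<cdot> f\<^sub>n\<close>. Both factors are at most \<open>((k+1)/(k-1))\<^sup>2\<^sup>c\<close>, and the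
  pointwise bound on the output distribution passes to every event, since the
  runtime is a function of the output.\<close>

definition survival_prob :: "nat \<Rightarrow> nat \<Rightarrow> nat \<Rightarrow> nat \<Rightarrow> real" where
  "survival_prob c k n i = (\<Prod>j<i. 1 - flip_prob c k n j)"

lemma flip_prob_eq: "flip_prob c k n j = 1 / real (n - j + k) ^ c"
  by (simp add: flip_prob_def max_def of_nat_diff)

lemma flip_prob_nonneg: "0 \<le> flip_prob c k n j"
  by (simp add: flip_prob_def)

lemma flip_prob_le_one: "flip_prob c k n j \<le> 1"
  by (cases "n - j + k = 0") (auto simp: flip_prob_eq power_0_left)

lemma flip_prob_Suc_size_le:
  assumes "k \<ge> 1"
  shows "flip_prob c k (Suc n) j \<le> flip_prob c k n j"
  using assms unfolding flip_prob_eq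
  by (intro divide_left_mono power_mono) auto

lemma flip_prob_le_Suc_size:
  assumes "k \<ge> 1"
  shows "flip_prob c k n j \<le> ((real k + 1) / real k) ^ c * flip_prob c k (Suc n) j"
proof -
  define a where "a = real (n - j + k)"
  define b where "b = real (Suc n - j + k)"
  have "a \<ge> real k" and "b > 0" using assms by (simp_all add: a_def b_def)
  have "b \<le> a + 1" by (simp add: a_def b_def)
  also have "\<dots> \<le> (real k + 1) / real k * a"
    using \<open>a \<ge> real k\<close> assms by (simp add: field_simps)
  finally have "b ^ c \<le> ((real k + 1) / real k) ^ c * a ^ c"
    unfolding power_mult_distrib[symmetric] using \<open>b > 0\<close> by (intro power_mono) auto
  then have "1 / a ^ c \<le> ((real k + 1) / real k) ^ c * (1 / b ^ c)"
    using \<open>a \<ge> real k\<close> \<open>b > 0\<close> assms by (simp add: field_simps)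
  then show ?thesis by (simp add: flip_prob_eq a_def b_def)
qed


lemma survival_prob_nonneg: "0 \<le> survival_prob c k n i"
  unfolding survival_prob_def using flip_prob_le_one by (intro prod_nonneg) auto

lemma survival_prob_le_Suc_size:
  assumes "k \<ge> 1"
  shows "survival_prob c k n i \<le> survival_prob c k (Suc n) i"
  unfolding survival_prob_def
  using flip_prob_le_one flip_prob_Suc_size_le[OF assms]
  by (intro prod_mono) (auto simp: algebra_simps)


lemma out_pmf_eq: "out_pmf c k n i = flip_prob c k n i * survival_prob c k n i"
  by (simp add: out_pmf_def survival_prob_def)

lemma out_pmf_nonneg: "0 \<le> out_pmf c k n i"
  by (simp add: out_pmf_eq flip_prob_nonneg survival_prob_nonneg)

lemma sum_out_pmf_lessThan: "(\<Sum>i<m. out_pmf c k n i) = 1 - survival_prob c k n m"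
  by (induction m) (auto simp: out_pmf_eq survival_prob_def algebra_simps)

lemma out_pmf_summable_on: "out_pmf c k n summable_on A"
proof -
  have "summable (out_pmf c k n)"
    using out_pmf_nonneg survival_prob_nonneg
    by (intro summableI_nonneg_bounded[where x = 1]) (auto simp: sum_out_pmf_lessThan)
  then have "out_pmf c k n summable_on UNIV"
    by (intro norm_summable_imp_summable_on) (simp add: out_pmf_nonneg)
  then show ?thesis
    by (rule summable_on_subset_banach) simp
qed

lemma one_minus_inverse_power_shift_le:
  fixes a :: real
  assumes "a \<ge> 1" and "c \<ge> 2"
  shows "(1 - 1 / (a + 1) ^ c) * (1 - 1 / a) \<le> (1 - 1 / (a + 1)) * (1 - 1 / a ^ c)"
proof -
  have "(1 - 1 / (a + 1) ^ c) * (1 - 1 / a) \<le> 1 - 1 / a"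
    using assms(1) by (intro mult_left_le_one_le) auto
  also have "\<dots> = (1 - 1 / (a + 1)) * (1 - 1 / a ^ 2)"
    using assms(1) by (simp add: divide_simps power2_eq_square) (simp add: algebra_simps)
  also have "\<dots> \<le> (1 - 1 / (a + 1)) * (1 - 1 / a ^ c)"
  proof -
    have "a ^ 2 \<le> a ^ c" using assms by (intro power_increasing) auto
    then have "1 / a ^ c \<le> 1 / a ^ 2" using assms(1) by (intro divide_left_mono) auto
    then show ?thesis using assms(1) by (intro mult_left_mono) auto
  qed
  finally show ?thesis .
qed

lemma survival_prob_Suc_size_le:
  assumes "k \<ge> 1" and "c \<ge> 2"
  shows "survival_prob c k (Suc n) i * (1 - 1 / real (Suc n - i + k)) \<le> survival_prob c k n i"
proof (induction i)
  case 0
  then show ?case by (simp add: survival_prob_def)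
next
  case (Suc i)
  define a where "a = real (n - i + k)"
  define b where "b = real (Suc n - i + k)"
  have a_ge: "a \<ge> 1" using assms(1) by (simp add: a_def)
  have shift: "(1 - 1 / b ^ c) * (1 - 1 / a) \<le> (1 - 1 / b) * (1 - 1 / a ^ c)"
  proof (cases "i \<le> n")
    case True
    then have "b = a + 1" by (simp add: a_def b_def Suc_diff_le)
    then show ?thesis using one_minus_inverse_power_shift_le[OF a_ge assms(2)] by simp
  next
    case False
    then have "b = a" by (simp add: a_def b_def)
    then show ?thesis by (simp add: mult.commute)
  qed
  have fail_a: "1 - flip_prob c k n i = 1 - 1 / a ^ c"
    by (simp add: flip_prob_eq a_def)
  have fail_b: "1 - flip_prob c k (Suc n) i = 1 - 1 / b ^ c"
    by (simp add: flip_prob_eq b_def)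
  have "survival_prob c k (Suc n) (Suc i) * (1 - 1 / real (Suc n - Suc i + k))
      = survival_prob c k (Suc n) i * ((1 - 1 / b ^ c) * (1 - 1 / a))"
    by (simp add: survival_prob_def fail_b a_def)
  also have "\<dots> \<le> survival_prob c k (Suc n) i * ((1 - 1 / b) * (1 - 1 / a ^ c))"
    using shift survival_prob_nonneg by (rule mult_left_mono)
  also have "\<dots> = (survival_prob c k (Suc n) i * (1 - 1 / b)) * (1 - 1 / a ^ c)"
    by simp
  also have "\<dots> \<le> survival_prob c k n i * (1 - 1 / a ^ c)"
    using Suc.IH flip_prob_le_one[of c k n i] fail_a
    by (intro mult_right_mono) (simp_all add: b_def)
  also have "\<dots> = survival_prob c k n (Suc i)"
    by (simp add: survival_prob_def fail_a)
  finally show ?case .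
qed

lemma out_pmf_le_Suc_size:
  assumes "k \<ge> 1"
  shows "out_pmf c k n i \<le> ((real k + 1) / real k) ^ c * out_pmf c k (Suc n) i"
proof -
  have "out_pmf c k n i
      \<le> (((real k + 1) / real k) ^ c * flip_prob c k (Suc n) i) * survival_prob c k (Suc n) i"
    unfolding out_pmf_eq
    using flip_prob_le_Suc_size[OF assms] survival_prob_le_Suc_size[OF assms]
      flip_prob_nonneg survival_prob_nonneg
    by (intro mult_mono) auto
  then show ?thesis by (simp add: out_pmf_eq)
qed

lemma out_pmf_Suc_size_le:
  assumes "k \<ge> 2" and "c \<ge> 2"
  shows "out_pmf c k (Suc n) i \<le> real k / (real k - 1) * out_pmf c k n i"
proof -
  have "survival_prob c k (Suc n) i * (1 - 1 / real k)
      \<le> survival_prob c k (Suc n) i * (1 - 1 / real (Suc n - i + k))"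
    using assms(1) survival_prob_nonneg
    by (intro mult_left_mono diff_left_mono divide_left_mono) auto
  also have "\<dots> \<le> survival_prob c k n i"
    using assms by (intro survival_prob_Suc_size_le) auto
  finally have "survival_prob c k (Suc n) i \<le> real k / (real k - 1) * survival_prob c k n i"
    using assms(1) by (simp add: field_simps)
  then have "out_pmf c k (Suc n) i
      \<le> flip_prob c k n i * (real k / (real k - 1) * survival_prob c k n i)"
    unfolding out_pmf_eq
    using assms(1) flip_prob_Suc_size_le flip_prob_nonneg survival_prob_nonneg
    by (intro mult_mono) auto
  then show ?thesis by (simp add: out_pmf_eq mult.left_commute)
qed

lemma out_pmf_le_neighbour_size:
  assumes "k \<ge> 2" and "c \<ge> 2" and "n' = Suc n \<or> n = Suc n' \<or> n = n'"
  shows "out_pmf c k n i \<le> ((real k + 1) / (real k - 1)) ^ (2 * c) * out_pmf c k n' i"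
proof -
  define r where "r = (real k + 1) / (real k - 1)"
  have r_ge: "1 \<le> r" "real k / (real k - 1) \<le> r" "(real k + 1) / real k \<le> r"
    using assms(1) by (auto simp: r_def field_simps)
  have "r ^ c \<le> r ^ (2 * c)"
    using r_ge(1) by (intro power_increasing) auto
  moreover have "r \<le> r ^ c"
    using r_ge(1) assms(2) power_increasing[of 1 c r] by simp
  ultimately have bound_down: "real k / (real k - 1) \<le> r ^ (2 * c)"
    and bound_up: "((real k + 1) / real k) ^ c \<le> r ^ (2 * c)"
    using r_ge(2) power_mono[OF r_ge(3), of c] assms(1) by auto
  from assms(3) consider "n' = Suc n" | "n = Suc n'" | "n = n'" by blast
  then have "out_pmf c k n i \<le> r ^ (2 * c) * out_pmf c k n' i"
  proof cases
    case 1
    then show ?thesis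
      using assms(1)
        order_trans[OF out_pmf_le_Suc_size mult_right_mono[OF bound_up out_pmf_nonneg]]
      by simp
  next
    case 2
    then show ?thesis
      using order_trans[OF out_pmf_Suc_size_le[OF assms(1,2)]
          mult_right_mono[OF bound_down out_pmf_nonneg]]
      by simp
  next
    case 3
    then show ?thesis
      using one_le_power[OF r_ge(1)] out_pmf_nonneg[of c k n' i]
      by (simp add: mult_le_cancel_right1)
  qed
  then show ?thesis by (simp add: r_def)
qed

lemma ins_del_adjacent_length:
  assumes "ins_del_adjacent x x'"
  shows "length x' = Suc (length x) \<or> length x = Suc (length x') \<or> length x = length x'"
  using assms unfolding ins_del_adjacent_def by auto

theorem mainTheorem8:
  fixes c k t0 t1 :: nat
  assumes "c \<ge> 2" and "k \<ge> 2"
  shows "\<forall>(x :: 'a list) x' S. ins_del_adjacent x x' \<longrightarrow>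
           joint_prob c k t0 t1 x S
             \<le> exp (2 * real c * ln ((real k + 1) / (real k - 1))) * joint_prob c k t0 t1 x' S"
proof (intro allI impI)
  fix x x' :: "'a list" and S
  assume adjacent: "ins_del_adjacent x x'"
  define r where "r = (real k + 1) / (real k - 1)"
  define A where "A = {i. (i, t0 + t1 * i) \<in> S}"
  have exp_eq: "exp (2 * real c * ln r) = r ^ (2 * c)"
    using exp_of_nat_mult[of "2 * c" "ln r"] assms(2) by (simp add: r_def)
  have "joint_prob c k t0 t1 x S = infsum (out_pmf c k (length x)) A"
    by (simp add: joint_prob_def A_def)
  also have "\<dots> \<le> infsum (\<lambda>i. r ^ (2 * c) * out_pmf c k (length x') i) A"
    using out_pmf_le_neighbour_size[OF assms(2,1) ins_del_adjacent_length[OF adjacent]]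
    by (intro infsum_mono out_pmf_summable_on summable_on_cmult_right) (simp add: r_def)
  also have "\<dots> = exp (2 * real c * ln r) * joint_prob c k t0 t1 x' S"
    by (simp add: infsum_cmult_right' joint_prob_def A_def exp_eq)
  finally show "joint_prob c k t0 t1 x S \<le> exp (2 * real c * ln r) * joint_prob c k t0 t1 x' S" .
qed

end
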